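(* Let $K\in{\rm Alg}(V)$ be a cyclic Galois field extension of $F$ of degree $n$ with ${\rm Gal}(K/F)=\langle\tau\rangle$. All $g,g'$ below are in ${\rm Gl}(V)$. (1) Let $y_1,z_1\in M$ and $y_i,z_i\in K^\times$ for $2\le i\le n-1$, with $N_{A_0/F}(1+y_1t+\cdots+y_{n-1}t^{n-1})\ne0$ and $N_{A_0/F}(1+z_1t+\cdots+z_{n-1}t^{n-1})\ne0$. Then $$K^{({\rm id}+\sum_{i=1}^{n-1}L(y_i)\tau^i,\,g)}\cong K^{({\rm id}+\sum_{i=1}^{n-1}L(z_i)\tau^i,\,g')}$$ iff $z_1=y_1$ and there exist $v\in K^\times$, $\sigma\in{\rm Gal}(K/F)$ with $y_1=\tau(v)v^{-1}\sigma(y_1)$, $z_i=\tau^i(v)v^{-1}\sigma(y_i)$ for all $i$, and $g'=\sigma g\sigma^{-1}L(v)$. For $\sigma={\rm id}$ this means: $z_i=y_i$ for all $i$ and $g'=ag$ for some $a\in F^\times$; for $\sigma=\tau$ it means: $z_i=\tau^i(y_1^{-1})y_1\tau(y_i)$ for all $i$ and $g'=a\,\tau g\tau^{-1}L(y_1^{-1})$ for some $a\in F^\times$. (2) Let $x_i,w_i\in K$ with $N_{A_0/F}(x_1t+\cdots+x_{n-1}t^{n-1})\ne0\ne N_{A_0/F}(w_1t+\cdots+w_{n-1}t^{n-1})$. Then $K^{({\rm id},\sum_{i=1}^{n-1}L(x_i)\tau^i)}\cong K^{({\rm id},\sum_{i=1}^{n-1}L(w_i)\tau^i)}$ iff there exist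 $v\in K^\times$, $\sigma\in{\rm Gal}(K/F)$ with $w_i=\sigma(x_i)\tau^i(v)$ for all $1\le i\le n-1$. (3) Let $x_i,w_i\in K$ with $N_{A_0/F}(1+x_1t+\cdots+x_{n-1}t^{n-1})\ne0\ne N_{A_0/F}(1+w_1t+\cdots+w_{n-1}t^{n-1})$. Then $K^{({\rm id},{\rm id}+\sum_{i=1}^{n-1}L(x_i)\tau^i)}\cong K^{({\rm id},{\rm id}+\sum_{i=1}^{n-1}L(w_i)\tau^i)}$ iff there exists $\sigma\in{\rm Gal}(K/F)$ with $w_i=\sigma(x_i)$ for all $1\le i\le n-1$.
   Context: $F$ is a field, $V$ an $n$-dimensional $F$-vector space, $K\in{\rm Alg}(V)$ an $F$-algebra structure on $V$ which is a field. $N=N_{K/F}$ is the field norm. $L(x)$ is the map $y\mapsto xy$. For $f,g\in{\rm End}_F(V)$, $K^{(f,g)}$ is $V$ with product $x\cdot y=f(x)g(y)$. $S(K)=\{x\in K:N(x)=1\}$ and $M\subseteq K^\times$ is a fixed set of representatives of $K^\times/S(K)$ containing $1$. $A_0=(K/F,\tau,1)$ is the cyclic algebra, the free left $K$-module with basis $1,t,\dots,t^{n-1}$ and multiplication $tx=\tau(x)t$, $t^n=1$, with reduced norm $N_{A_0/F}$; $N_{A_0/F}(\sum y_it^i)\ne0$ iff $\sum L(y_i)\tau^i$ is invertible. *)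

theory Defs
  imports Main
begin

text \<open>The field K is modelled as the whole type 'a; the base field F is a subfield
  F of 'a; V is K regarded as an F-vector space.\<close>

definition subfield :: "'a::field set \<Rightarrow> bool" where
  "subfield F \<longleftrightarrow> 0 \<in> F \<and> 1 \<in> F \<and>
     (\<forall>a\<in>F. \<forall>b\<in>F. a + b \<in> F \<and> a - b \<in> F \<and> a * b \<in> F) \<and>
     (\<forall>a\<in>F. inverse a \<in> F)"

definition ext_degree :: "'a::field set \<Rightarrow> nat \<Rightarrow> bool" where
  "ext_degree F n \<longleftrightarrow> (\<exists>b :: nat \<Rightarrow> 'a.
     bij_betw (\<lambda>c. \<Sum>i<n. c i * b i) {c. (\<forall>i<n. c i \<in> F) \<and> (\<forall>i\<ge>n. c i = 0)} UNIV)"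

definition F_linear :: "'a::field set \<Rightarrow> ('a \<Rightarrow> 'a) \<Rightarrow> bool" where
  "F_linear F f \<longleftrightarrow> (\<forall>x y. f (x + y) = f x + f y) \<and> (\<forall>a\<in>F. \<forall>x. f (a * x) = a * f x)"

definition GL :: "'a::field set \<Rightarrow> ('a \<Rightarrow> 'a) set" where
  "GL F = {f. F_linear F f \<and> bij f}"

definition Gal :: "'a::field set \<Rightarrow> ('a \<Rightarrow> 'a) set" where
  "Gal F = {\<sigma>. bij \<sigma> \<and> (\<forall>x y. \<sigma> (x + y) = \<sigma> x + \<sigma> y) \<and> (\<forall>x y. \<sigma> (x * y) = \<sigma> x * \<sigma> y)
               \<and> \<sigma> 1 = 1 \<and> (\<forall>a\<in>F. \<sigma> a = a)}"

definition cyclic_galois :: "'a::field set \<Rightarrow> nat \<Rightarrow> ('a \<Rightarrow> 'a) \<Rightarrow> bool" where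
  "cyclic_galois F n \<tau> \<longleftrightarrow> subfield F \<and> ext_degree F n \<and> \<tau> \<in> Gal F \<and>
     Gal F = {\<tau> ^^ i | i. i < n} \<and> card (Gal F) = n"

definition field_norm :: "'a::field set \<Rightarrow> 'a \<Rightarrow> 'a" where
  "field_norm F x = (\<Prod>\<sigma>\<in>Gal F. \<sigma> x)"

definition S_norm1 :: "'a::field set \<Rightarrow> 'a set" where
  "S_norm1 F = {x. field_norm F x = 1}"

definition norm_reps :: "'a::field set \<Rightarrow> 'a set \<Rightarrow> bool" where
  "norm_reps F M \<longleftrightarrow> M \<subseteq> - {0} \<and> 1 \<in> M \<and>
     (\<forall>x. x \<noteq> 0 \<longrightarrow> (\<exists>!m. m \<in> M \<and> (\<exists>s\<in>S_norm1 F. x = m * s)))"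

text \<open>The F-linear map sum_(i<n) L(c_i) tau^i attached to sum_(i<n) c_i t^i in A_0.\<close>
definition cyc_map :: "nat \<Rightarrow> ('a::field \<Rightarrow> 'a) \<Rightarrow> (nat \<Rightarrow> 'a) \<Rightarrow> 'a \<Rightarrow> 'a" where
  "cyc_map n \<tau> c = (\<lambda>u. \<Sum>i<n. c i * (\<tau> ^^ i) u)"

text \<open>N_(A_0/F)(sum_(i<n) c_i t^i) \<noteq> 0; A_0 = (K/F,tau,1) is split,
  A_0 \<cong> End_F(K) via x t^i \<mapsto> L(x) tau^i, so the reduced norm is the determinant of
  cyc_map, which is nonzero iff cyc_map is invertible.\<close>
definition A0_norm_nonzero :: "nat \<Rightarrow> ('a::field \<Rightarrow> 'a) \<Rightarrow> (nat \<Rightarrow> 'a) \<Rightarrow> bool" where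
  "A0_norm_nonzero n \<tau> c \<longleftrightarrow> bij (cyc_map n \<tau> c)"

definition twisted_iso ::
  "'a::field set \<Rightarrow> ('a \<Rightarrow> 'a) \<Rightarrow> ('a \<Rightarrow> 'a) \<Rightarrow> ('a \<Rightarrow> 'a) \<Rightarrow> ('a \<Rightarrow> 'a) \<Rightarrow> bool" where
  "twisted_iso F f g f' g' \<longleftrightarrow> (\<exists>\<phi>. F_linear F \<phi> \<and> bij \<phi> \<and>
     (\<forall>x y. \<phi> (f x * g y) = f' (\<phi> x) * g' (\<phi> y)))"

definition cond1 :: "nat \<Rightarrow> ('a::field \<Rightarrow> 'a) \<Rightarrow> (nat \<Rightarrow> 'a) \<Rightarrow> (nat \<Rightarrow> 'a)
     \<Rightarrow> ('a \<Rightarrow> 'a) \<Rightarrow> ('a \<Rightarrow> 'a) \<Rightarrow> ('a \<Rightarrow> 'a) \<Rightarrow> bool" where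
  "cond1 n \<tau> y z g g' \<sigma> \<longleftrightarrow> (\<exists>v. v \<noteq> 0 \<and>
      y 1 = \<tau> v * inverse v * \<sigma> (y 1) \<and>
      (\<forall>i\<in>{1..n-1}. z i = (\<tau> ^^ i) v * inverse v * \<sigma> (y i)) \<and>
      g' = (\<lambda>u. \<sigma> (g (inv \<sigma> (v * u)))))"

end

theory Submission
  imports Defs "Jordan_Normal_Form.Determinant"
begin

text \<open>An isomorphism \<open>\<phi>\<close> from \<open>K^(f,g)\<close> to \<open>K^(f',g')\<close>, with \<open>f\<close> and \<open>g\<close> bijective,
  satisfies \<open>\<phi> (x * y) = f' (\<phi> (f\<^sup>-\<^sup>1 x)) * g' (\<phi> (g\<^sup>-\<^sup>1 y))\<close>, and an additive bijection
  whose values on products split like this is \<open>c \<sigma>\<close> with \<open>c \<noteq> 0\<close> and \<open>\<sigma> \<in> Gal(K/F)\<close>.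
  Substituting \<open>\<phi> = c \<sigma>\<close> turns the isomorphism condition into equalities of maps
  \<open>\<Sum> L(a\<^sub>i) \<tau>\<^sup>i\<close>, i.e. (Dedekind's independence of \<open>1, \<tau>, \<dots>, \<tau>\<^sup>n\<^sup>-\<^sup>1\<close>) into equalities
  of coefficients. In part (1) the coefficient of \<open>t\<close> shows that \<open>z\<^sub>1\<close> and \<open>y\<^sub>1\<close> have the
  same norm, so \<open>z\<^sub>1 = y\<^sub>1\<close> because \<open>M\<close> meets every norm class once; the special cases
  \<open>\<sigma> = id, \<tau>\<close> rest on the fixed field of \<open>\<tau>\<close> being \<open>F\<close>.\<close>

unbundle no m_inv_syntax

lemma Gal_bij: "\<sigma> \<in> Gal F \<Longrightarrow> bij \<sigma>"
  and Gal_add: "\<sigma> \<in> Gal F \<Longrightarrow> \<sigma> (x + y) = \<sigma> x + \<sigma> y"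
  and Gal_mult: "\<sigma> \<in> Gal F \<Longrightarrow> \<sigma> (x * y) = \<sigma> x * \<sigma> y"
  and Gal_one: "\<sigma> \<in> Gal F \<Longrightarrow> \<sigma> 1 = 1"
  and Gal_fixes: "\<sigma> \<in> Gal F \<Longrightarrow> a \<in> F \<Longrightarrow> \<sigma> a = a"
  by (auto simp: Gal_def)

lemma Gal_zero: "\<sigma> \<in> Gal F \<Longrightarrow> \<sigma> 0 = 0"
  using Gal_add[of \<sigma> F 0 0] by (metis add_cancel_right_right)

lemma Gal_eq_0_iff: "\<sigma> \<in> Gal F \<Longrightarrow> \<sigma> x = 0 \<longleftrightarrow> x = 0"
  by (metis Gal_bij Gal_zero bij_pointE)

lemma Gal_inverse: "\<sigma> \<in> Gal F \<Longrightarrow> \<sigma> (inverse x) = inverse (\<sigma> x)"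
proof (cases "x = 0")
  case False
  assume \<sigma>: "\<sigma> \<in> Gal F"
  have "\<sigma> (inverse x) * \<sigma> x = 1"
    using False by (simp add: Gal_one[OF \<sigma>] flip: Gal_mult[OF \<sigma>])
  then show ?thesis by (metis inverse_unique mult.commute)
qed (simp add: Gal_zero)

lemma Gal_sum: "\<sigma> \<in> Gal F \<Longrightarrow> \<sigma> (sum f A) = (\<Sum>i\<in>A. \<sigma> (f i))"
  by (induction A rule: infinite_finite_induct) (simp_all add: Gal_zero Gal_add)

lemma id_in_Gal: "id \<in> Gal F"
  by (auto simp: Gal_def)

lemma Gal_comp: "\<sigma> \<in> Gal F \<Longrightarrow> \<rho> \<in> Gal F \<Longrightarrow> \<sigma> \<circ> \<rho> \<in> Gal F"
  by (auto simp: Gal_def intro: bij_comp)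

lemma Gal_funpow: "\<tau> \<in> Gal F \<Longrightarrow> \<tau> ^^ i \<in> Gal F"
  by (induction i) (simp_all add: id_in_Gal Gal_comp)

lemma Gal_unit_eq_iff:
  assumes "\<rho> \<in> Gal F" "c \<noteq> 0"
  shows "a = b * \<rho> c \<longleftrightarrow> b = a * \<rho> (inverse c)"
  unfolding Gal_inverse[OF assms(1)] using assms by (auto simp: Gal_eq_0_iff field_simps)

lemma all_less_iff_zero_and_range:
  fixes n :: nat
  assumes "0 < n"
  shows "(\<forall>i<n. P i) \<longleftrightarrow> P 0 \<and> (\<forall>i\<in>{1..n-1}. P i)"
proof -
  have "i \<in> {1..n-1} \<longleftrightarrow> i < n \<and> i \<noteq> 0" for i by auto
  then show ?thesis using assms by auto
qed

lemma comp_scaled_bij_eq_iff: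
  fixes c :: "'a::field"
  assumes "bij \<sigma>" "c \<noteq> 0"
  shows "(\<forall>u. h (c * \<sigma> u) = k u) \<longleftrightarrow> h = (\<lambda>w. k (inv \<sigma> (inverse c * w)))"
proof
  assume h: "\<forall>u. h (c * \<sigma> u) = k u"
  show "h = (\<lambda>w. k (inv \<sigma> (inverse c * w)))"
  proof
    fix w
    have "c * \<sigma> (inv \<sigma> (inverse c * w)) = w"
      using assms by (simp add: bij_is_surj surj_f_inv_f mult.assoc[symmetric])
    then show "h w = k (inv \<sigma> (inverse c * w))" using h by metis
  qed
qed (use assms in \<open>simp add: bij_is_inj mult.assoc[symmetric]\<close>)

lemma Gal_linear_independent:
  assumes "finite I" "inj_on f I" "\<And>i. i \<in> I \<Longrightarrow> f i \<in> Gal F"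
    and "\<And>u. (\<Sum>i\<in>I. c i * f i u) = 0"
  shows "\<forall>i\<in>I. c i = 0"
  using assms
proof (induction I arbitrary: c rule: finite_induct)
  case empty
  then show ?case by simp
next
  case (insert j I)
  have Gal_j: "f j \<in> Gal F" using insert.prems(2) by simp
  \<comment> \<open>Artin's trick: compare the relation at \<open>h * u\<close> with \<open>f j h\<close> times the relation at \<open>u\<close>.\<close>
  have shorter: "c i * (f i h - f j h) = 0" if "i \<in> I" for i h
  proof -
    have "(\<Sum>i\<in>I. c i * (f i h - f j h) * f i u) = 0" for u
    proof -
      have "(\<Sum>i\<in>I. c i * (f i h - f j h) * f i u)
          = (\<Sum>i\<in>insert j I. c i * (f i h - f j h) * f i u)"
        using insert.hyps by simp
      also have "\<dots> = (\<Sum>i\<in>insert j I. c i * f i (h * u)) - f j h * (\<Sum>i\<in>insert j I. c i * f i u)"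
        by (simp add: Gal_mult[OF insert.prems(2)] sum_distrib_left algebra_simps flip: sum_subtractf)
      also have "\<dots> = 0"
        using insert.prems(3) by simp
      finally show ?thesis .
    qed
    then show ?thesis
      using insert.IH[of "\<lambda>i. c i * (f i h - f j h)"] insert.prems(1,2) that by auto
  qed
  have c_I: "c i = 0" if "i \<in> I" for i
  proof -
    have "f i \<noteq> f j"
      using insert.prems(1) insert.hyps(2) that by (auto simp: inj_on_def)
    then obtain h where "f i h \<noteq> f j h" by auto
    then show ?thesis using shorter[OF that, of h] by simp
  qed
  have "c j * f j 1 = 0"
    using insert.prems(3)[of 1] insert.hyps c_I by simp
  then show ?case using c_I Gal_one[OF Gal_j] by simp
qed

lemma scaled_Gal_F_linear_bij:
  assumes "\<sigma> \<in> Gal F" "c \<noteq> 0"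
  shows "F_linear F (\<lambda>u. c * \<sigma> u)" "bij (\<lambda>u. c * \<sigma> u)"
proof -
  show "F_linear F (\<lambda>u. c * \<sigma> u)"
    using assms(1) by (simp add: F_linear_def Gal_add Gal_mult Gal_fixes algebra_simps)
  have "(\<lambda>u. c * \<sigma> u) = (\<lambda>u. c * u) \<circ> \<sigma>" by auto
  moreover have "bij (\<lambda>u. c * u)"
    by (rule o_bij[where g="\<lambda>u. inverse c * u"]) (use assms(2) in \<open>auto simp: fun_eq_iff\<close>)
  ultimately show "bij (\<lambda>u. c * \<sigma> u)" using Gal_bij[OF assms(1)] by (simp add: bij_comp)
qed

text \<open>Dividing by \<open>\<phi> 1 = P 1 * Q 1\<close> makes \<open>\<phi>\<close> multiplicative.\<close>
lemma factorizing_bij_is_scaled_Gal: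
  assumes lin: "F_linear F \<phi>" and bij: "bij \<phi>" and split: "\<And>x y. \<phi> (x * y) = P x * Q y"
  obtains c \<sigma> where "c \<noteq> 0" "\<sigma> \<in> Gal F" "\<phi> = (\<lambda>u. c * \<sigma> u)"
proof -
  have add: "\<phi> (x + y) = \<phi> x + \<phi> y" for x y using lin by (simp add: F_linear_def)
  then have "\<phi> 0 = 0" by (metis add_cancel_right_right)
  define c where "c = \<phi> 1"
  have c: "c \<noteq> 0"
    unfolding c_def by (metis \<open>\<phi> 0 = 0\<close> bij bij_pointE zero_neq_one)
  have c_split: "c = P 1 * Q 1" using split[of 1 1] c_def by simp
  then have "P 1 \<noteq> 0" "Q 1 \<noteq> 0" using c by auto
  then have P: "P x = \<phi> x / Q 1" and Q: "Q y = \<phi> y / P 1" for x y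
    using split[of x 1] split[of 1 y] by simp_all
  define \<sigma> where "\<sigma> u = \<phi> u / c" for u
  have "\<sigma> \<in> Gal F"
    unfolding Gal_def
  proof (intro CollectI conjI allI ballI)
    have "\<sigma> = (\<lambda>u. inverse c * u) \<circ> \<phi>" unfolding \<sigma>_def by (auto simp: field_simps)
    then show "bij \<sigma>"
      using scaled_Gal_F_linear_bij(2)[OF id_in_Gal, of "inverse c"] c bij
      by (simp add: bij_comp)
    show "\<sigma> (x + y) = \<sigma> x + \<sigma> y" for x y unfolding \<sigma>_def by (simp add: add add_divide_distrib)
    show "\<sigma> (x * y) = \<sigma> x * \<sigma> y" for x y
    proof -
      have "\<phi> (x * y) = (\<phi> x / Q 1) * (\<phi> y / P 1)" using split P Q by metis
      then show ?thesis
        unfolding \<sigma>_def c_split using \<open>P 1 \<noteq> 0\<close> \<open>Q 1 \<noteq> 0\<close> by (simp add: field_simps)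
    qed
    show "\<sigma> 1 = 1" unfolding \<sigma>_def c_def[symmetric] using c by simp
    show "\<sigma> a = a" if "a \<in> F" for a
    proof -
      have "\<phi> (a * 1) = a * \<phi> 1" using lin that unfolding F_linear_def by blast
      then show ?thesis unfolding \<sigma>_def c_def using c c_def by simp
    qed
  qed
  moreover have "\<phi> = (\<lambda>u. c * \<sigma> u)" unfolding \<sigma>_def using c by auto
  ultimately show thesis using that c by blast
qed

lemma twisted_iso_iff_scaled_Gal:
  assumes "bij f" "bij g"
  shows "twisted_iso F f g f' g' \<longleftrightarrow> (\<exists>c \<sigma>. c \<noteq> 0 \<and> \<sigma> \<in> Gal F \<and>
           (\<forall>x y. c * \<sigma> (f x * g y) = f' (c * \<sigma> x) * g' (c * \<sigma> y)))"
proof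
  assume "twisted_iso F f g f' g'"
  then obtain \<phi> where lin: "F_linear F \<phi>" and bij: "bij \<phi>"
    and iso: "\<And>x y. \<phi> (f x * g y) = f' (\<phi> x) * g' (\<phi> y)"
    unfolding twisted_iso_def by blast
  have "\<phi> (x * y) = f' (\<phi> (inv f x)) * g' (\<phi> (inv g y))" for x y
    using iso[of "inv f x" "inv g y"] assms by (simp add: bij_is_surj surj_f_inv_f)
  then obtain c \<sigma> where "c \<noteq> 0" "\<sigma> \<in> Gal F" "\<phi> = (\<lambda>u. c * \<sigma> u)"
    by (rule factorizing_bij_is_scaled_Gal[OF lin bij])
  then show "\<exists>c \<sigma>. c \<noteq> 0 \<and> \<sigma> \<in> Gal F \<and> (\<forall>x y. c * \<sigma> (f x * g y) = f' (c * \<sigma> x) * g' (c * \<sigma> y))"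
    using iso by auto
next
  assume "\<exists>c \<sigma>. c \<noteq> 0 \<and> \<sigma> \<in> Gal F \<and> (\<forall>x y. c * \<sigma> (f x * g y) = f' (c * \<sigma> x) * g' (c * \<sigma> y))"
  then show "twisted_iso F f g f' g'"
    unfolding twisted_iso_def by (metis scaled_Gal_F_linear_bij)
qed

lemma field_norm_mult: "field_norm F (x * y) = field_norm F x * field_norm F y"
  unfolding field_norm_def by (simp add: Gal_mult prod.distrib)

lemma field_norm_inverse: "field_norm F (inverse x) = inverse (field_norm F x)"
  unfolding field_norm_def using prod_inversef[of "\<lambda>\<sigma>. \<sigma> x" "Gal F"]
  by (simp add: Gal_inverse comp_def)

lemma field_norm_nonzero: "x \<noteq> 0 \<Longrightarrow> field_norm F x \<noteq> 0"
  unfolding field_norm_def by (cases "finite (Gal F)") (simp_all add: Gal_eq_0_iff)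

lemma norm_reps_eq:
  assumes M: "norm_reps F M" and "y \<in> M" "z \<in> M" and norm: "field_norm F z = field_norm F y"
  shows "z = y"
proof -
  have "y \<noteq> 0" "z \<noteq> 0" using M \<open>y \<in> M\<close> \<open>z \<in> M\<close> by (auto simp: norm_reps_def)
  have "z * inverse y \<in> S_norm1 F"
    using norm \<open>y \<noteq> 0\<close> field_norm_nonzero[of y F]
    by (simp add: S_norm1_def field_norm_mult field_norm_inverse)
  then have "\<exists>s\<in>S_norm1 F. z = y * s"
    using \<open>y \<noteq> 0\<close> by (intro bexI[where x="z * inverse y"]) simp_all
  moreover have "\<exists>s\<in>S_norm1 F. z = z * s"
    by (intro bexI[where x=1]) (simp_all add: S_norm1_def field_norm_def Gal_one)
  moreover have "\<exists>!m. m \<in> M \<and> (\<exists>s\<in>S_norm1 F. z = m * s)"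
    using M \<open>z \<noteq> 0\<close> by (auto simp: norm_reps_def)
  ultimately show ?thesis using \<open>y \<in> M\<close> \<open>z \<in> M\<close> by blast
qed

lemma square_matrix_columns_independent:
  fixes A :: "nat \<Rightarrow> nat \<Rightarrow> 'a::field"
  assumes rows: "\<And>c. \<forall>k<n. (\<Sum>j<n. c j * A j k) = 0 \<Longrightarrow> \<forall>j<n. c j = 0"
    and col_relation: "\<forall>j<n. (\<Sum>k<n. A j k * d k) = 0"
  shows "\<forall>k<n. d k = 0"
proof -
  define B where "B = mat n n (\<lambda>(j, k). A j k)"
  have B: "B \<in> carrier_mat n n" unfolding B_def by simp
  have "det (transpose_mat B) \<noteq> 0"
  proof
    assume "det (transpose_mat B) = 0"
    then obtain c where c: "c \<in> carrier_vec n" "c \<noteq> 0\<^sub>v n" "transpose_mat B *\<^sub>v c = 0\<^sub>v n"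
      using det_0_iff_vec_prod_zero_field[of "transpose_mat B" n] B by auto
    have "\<forall>k<n. (\<Sum>j<n. c $ j * A j k) = 0"
    proof (intro allI impI)
      fix k assume k: "k < n"
      have "(transpose_mat B *\<^sub>v c) $ k = 0" using c(3) k by simp
      then show "(\<Sum>j<n. c $ j * A j k) = 0"
        using k c(1) unfolding B_def by (simp add: scalar_prod_def atLeast0LessThan mult.commute)
    qed
    then have "c = 0\<^sub>v n" using rows c(1) by (intro eq_vecI) auto
    with c(2) show False by simp
  qed
  then have "det B \<noteq> 0" using det_transpose[OF B] by simp
  moreover have "B *\<^sub>v vec n d = 0\<^sub>v n"
    using col_relation unfolding B_def by (intro eq_vecI) (auto simp: scalar_prod_def atLeast0LessThan)
  ultimately have "vec n d = 0\<^sub>v n" using det_0_iff_vec_prod_zero_field[OF B] vec_carrier by blast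
  then show ?thesis by (metis index_vec index_zero_vec(1))
qed

locale cyclic_extension =
  fixes F :: "'a::field set" and n :: nat and \<tau> :: "'a \<Rightarrow> 'a"
  assumes cyclic: "cyclic_galois F n \<tau>"
begin

lemma F_subfield: "subfield F" and F_ext_degree: "ext_degree F n" and tau_Gal: "\<tau> \<in> Gal F"
  and Gal_eq: "Gal F = {\<tau> ^^ i | i. i < n}" and card_Gal: "card (Gal F) = n"
  using cyclic by (auto simp: cyclic_galois_def)

lemma n_pos: "0 < n"
  using id_in_Gal[of F] Gal_eq by auto

lemma finite_Gal: "finite (Gal F)"
  using card_Gal n_pos card_ge_0_finite by auto

lemma tau_pow_Gal: "\<tau> ^^ i \<in> Gal F"
  using Gal_funpow[OF tau_Gal] .

lemma inj_on_tau_pow: "inj_on (\<lambda>i. \<tau> ^^ i) {..<n}"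
proof -
  have "Gal F = (\<lambda>i. \<tau> ^^ i) ` {..<n}" using Gal_eq by auto
  then show ?thesis using card_Gal by (simp add: eq_card_imp_inj_on)
qed

lemma Gal_commute: "\<sigma> \<in> Gal F \<Longrightarrow> \<sigma> ((\<tau> ^^ i) u) = (\<tau> ^^ i) (\<sigma> u)"
  using Gal_eq by (auto simp flip: funpow_add[unfolded comp_def, THEN fun_cong] simp: add.commute)

lemma cyc_map_eq_iff: "cyc_map n \<tau> p = cyc_map n \<tau> q \<longleftrightarrow> (\<forall>i<n. p i = q i)"
proof
  assume "cyc_map n \<tau> p = cyc_map n \<tau> q"
  then have "(\<Sum>i<n. (p i - q i) * (\<tau> ^^ i) u) = 0" for u
    by (simp add: cyc_map_def fun_eq_iff left_diff_distrib sum_subtractf)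
  then show "\<forall>i<n. p i = q i"
    using Gal_linear_independent[OF _ inj_on_tau_pow tau_pow_Gal] by fastforce
qed (simp add: cyc_map_def)

lemma tau_pow_F_combination:
  "\<forall>k<n. e k \<in> F \<Longrightarrow> (\<tau> ^^ j) (\<Sum>k<n. e k * b k) = (\<Sum>k<n. e k * (\<tau> ^^ j) (b k))"
  by (simp add: Gal_sum[OF tau_pow_Gal] Gal_mult[OF tau_pow_Gal] Gal_fixes[OF tau_pow_Gal])

lemma obtain_spanning_family:
  obtains b :: "nat \<Rightarrow> 'a" where "\<And>u. \<exists>e. (\<forall>k<n. e k \<in> F) \<and> u = (\<Sum>k<n. e k * b k)"
proof -
  obtain b :: "nat \<Rightarrow> 'a" where "bij_betw (\<lambda>c. \<Sum>i<n. c i * b i)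
     {c. (\<forall>i<n. c i \<in> F) \<and> (\<forall>i\<ge>n. c i = 0)} UNIV"
    using F_ext_degree unfolding ext_degree_def by blast
  then have "\<exists>e. (\<forall>k<n. e k \<in> F) \<and> u = (\<Sum>k<n. e k * b k)" for u
    by (fastforce dest: bij_betw_imp_surj_on)
  then show thesis by (rule that)
qed

lemma tau_pow_on_spanning_family_independent:
  assumes span: "\<And>u. \<exists>e. (\<forall>k<n. e k \<in> F) \<and> u = (\<Sum>k<n. e k * b k)"
    and relation: "\<forall>k<n. (\<Sum>j<n. c j * (\<tau> ^^ j) (b k)) = 0"
  shows "\<forall>j<n. c j = 0"
proof -
  have "(\<Sum>j<n. c j * (\<tau> ^^ j) u) = 0" for u
  proof -
    obtain e where e: "\<forall>k<n. e k \<in> F" "u = (\<Sum>k<n. e k * b k)" using span by blast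
    have "(\<Sum>j<n. c j * (\<tau> ^^ j) u) = (\<Sum>j<n. \<Sum>k<n. e k * (c j * (\<tau> ^^ j) (b k)))"
      unfolding e(2) tau_pow_F_combination[OF e(1)] by (simp add: sum_distrib_left mult.left_commute)
    also have "\<dots> = (\<Sum>k<n. e k * (\<Sum>j<n. c j * (\<tau> ^^ j) (b k)))"
      by (subst sum.swap) (simp add: sum_distrib_left)
    also have "\<dots> = 0" using relation by simp
    finally show ?thesis .
  qed
  then show ?thesis
    using Gal_linear_independent[OF _ inj_on_tau_pow tau_pow_Gal] by blast
qed

text \<open>The matrix \<open>(\<tau>\<^sup>j (b k))\<close> of a spanning family \<open>b\<close> has independent rows, hence
  independent columns; a fixed \<open>v\<close> yields the column relation \<open>f k - v * e k\<close>, where \<open>f\<close>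
  and \<open>e\<close> are coordinates of \<open>v\<close> and \<open>1\<close>.\<close>
lemma tau_fixed_imp_in_F:
  assumes fixed: "\<tau> v = v"
  shows "v \<in> F"
proof -
  obtain b where span: "\<And>u. \<exists>e. (\<forall>k<n. e k \<in> F) \<and> u = (\<Sum>k<n. e k * b k)"
    by (rule obtain_spanning_family) blast
  obtain f where f: "\<forall>k<n. f k \<in> F" "v = (\<Sum>k<n. f k * b k)" using span by blast
  obtain e where e: "\<forall>k<n. e k \<in> F" "1 = (\<Sum>k<n. e k * b k)" using span by blast
  have "\<forall>j<n. (\<Sum>k<n. (\<tau> ^^ j) (b k) * (f k - v * e k)) = 0"
  proof (intro allI impI)
    fix j
    have "(\<tau> ^^ j) v = v" using fixed by (induction j) auto
    then have "(\<tau> ^^ j) v - v * (\<tau> ^^ j) 1 = 0" by (simp add: Gal_one[OF tau_pow_Gal])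
    then show "(\<Sum>k<n. (\<tau> ^^ j) (b k) * (f k - v * e k)) = 0"
      unfolding f(2) e(2) tau_pow_F_combination[OF f(1)] tau_pow_F_combination[OF e(1)]
      by (simp add: algebra_simps sum_subtractf sum_distrib_left)
  qed
  with tau_pow_on_spanning_family_independent[OF span] have "\<forall>k<n. f k - v * e k = 0"
    by (rule square_matrix_columns_independent[where A="\<lambda>j k. (\<tau> ^^ j) (b k)"])
  moreover obtain k where "k < n" "e k \<noteq> 0"
  proof -
    have "\<not> (\<forall>k<n. e k = 0)"
    proof
      assume "\<forall>k<n. e k = 0"
      then have "(\<Sum>k<n. e k * b k) = 0" by simp
      with e(2) show False by simp
    qed
    then show ?thesis using that by blast
  qed
  ultimately have "v = f k * inverse (e k)" by simp
  then show ?thesis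
    using F_subfield f(1) e(1) \<open>k < n\<close> by (simp add: subfield_def)
qed

lemma field_norm_Gal:
  assumes "\<sigma> \<in> Gal F"
  shows "field_norm F (\<sigma> x) = field_norm F x"
proof -
  have inj: "inj_on (\<lambda>\<rho>. \<rho> \<circ> \<sigma>) (Gal F)"
  proof (rule inj_onI)
    fix \<rho> \<rho>' :: "'a \<Rightarrow> 'a" assume "\<rho> \<circ> \<sigma> = \<rho>' \<circ> \<sigma>"
    then have "\<rho> (\<sigma> (inv \<sigma> u)) = \<rho>' (\<sigma> (inv \<sigma> u))" for u by (metis comp_apply)
    then show "\<rho> = \<rho>'"
      by (simp add: fun_eq_iff surj_f_inv_f[OF bij_is_surj[OF Gal_bij[OF assms]]])
  qed
  then have "(\<lambda>\<rho>. \<rho> \<circ> \<sigma>) ` Gal F = Gal F"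
    using endo_inj_surj[OF finite_Gal _ inj] Gal_comp[OF _ assms] by blast
  then have "field_norm F x = (\<Prod>\<rho>\<in>Gal F. (\<rho> \<circ> \<sigma>) x)"
    unfolding field_norm_def using prod.reindex[OF inj, of "\<lambda>\<rho>. \<rho> x"] by simp
  then show ?thesis unfolding field_norm_def by simp
qed

lemma field_norm_eq_if_twisted:
  assumes "c \<noteq> 0" "\<sigma> \<in> Gal F" "c * \<sigma> y = z * \<tau> c"
  shows "field_norm F z = field_norm F y"
  using arg_cong[OF assms(3), of "field_norm F"] field_norm_nonzero[OF assms(1), of F]
  by (simp add: field_norm_mult field_norm_Gal[OF assms(2)] field_norm_Gal[OF tau_Gal])

lemma Gal_cyc_map:
  "\<sigma> \<in> Gal F \<Longrightarrow> \<sigma> (cyc_map n \<tau> a u) = cyc_map n \<tau> (\<lambda>i. \<sigma> (a i)) (\<sigma> u)"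
  by (simp add: cyc_map_def Gal_sum Gal_mult Gal_commute)

lemma cyc_map_mult:
  "cyc_map n \<tau> b (c * u) = cyc_map n \<tau> (\<lambda>i. b i * (\<tau> ^^ i) c) u"
  by (simp add: cyc_map_def Gal_mult[OF tau_pow_Gal] mult.assoc)

lemma mult_cyc_map: "d * cyc_map n \<tau> a u = cyc_map n \<tau> (\<lambda>i. d * a i) u"
  by (simp add: cyc_map_def sum_distrib_left mult.assoc)

lemma Gal_cyc_map_scaled_iff:
  assumes "\<sigma> \<in> Gal F"
  shows "(\<forall>u. d * \<sigma> (cyc_map n \<tau> a u) = cyc_map n \<tau> b (c * \<sigma> u)) \<longleftrightarrow>
         (\<forall>i<n. d * \<sigma> (a i) = b i * (\<tau> ^^ i) c)"
proof -
  let ?lhs = "cyc_map n \<tau> (\<lambda>i. d * \<sigma> (a i))" and ?rhs = "cyc_map n \<tau> (\<lambda>i. b i * (\<tau> ^^ i) c)"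
  have "(\<forall>u. d * \<sigma> (cyc_map n \<tau> a u) = cyc_map n \<tau> b (c * \<sigma> u)) \<longleftrightarrow>
        (\<forall>u. ?lhs (\<sigma> u) = ?rhs (\<sigma> u))"
    by (simp add: Gal_cyc_map[OF assms] mult_cyc_map cyc_map_mult)
  also have "\<dots> \<longleftrightarrow> ?lhs = ?rhs"
  proof
    assume "\<forall>u. ?lhs (\<sigma> u) = ?rhs (\<sigma> u)"
    then have "?lhs (\<sigma> (inv \<sigma> w)) = ?rhs (\<sigma> (inv \<sigma> w))" for w by blast
    then show "?lhs = ?rhs"
      by (simp add: fun_eq_iff surj_f_inv_f[OF bij_is_surj[OF Gal_bij[OF assms]]])
  qed simp
  finally show ?thesis by (simp add: cyc_map_eq_iff)
qed

lemma twisted_iso_id_cyc_map_iff: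
  assumes "bij (cyc_map n \<tau> a)"
  shows "twisted_iso F id (cyc_map n \<tau> a) id (cyc_map n \<tau> b) \<longleftrightarrow>
    (\<exists>c \<sigma>. c \<noteq> 0 \<and> \<sigma> \<in> Gal F \<and> (\<forall>i<n. \<sigma> (a i) = b i * (\<tau> ^^ i) c))"
proof -
  have "(\<forall>x y. c * \<sigma> (x * cyc_map n \<tau> a y) = c * \<sigma> x * cyc_map n \<tau> b (c * \<sigma> y)) \<longleftrightarrow>
        (\<forall>i<n. \<sigma> (a i) = b i * (\<tau> ^^ i) c)" if "c \<noteq> 0" "\<sigma> \<in> Gal F" for c \<sigma>
  proof -
    have "(\<forall>x y. c * \<sigma> (x * cyc_map n \<tau> a y) = c * \<sigma> x * cyc_map n \<tau> b (c * \<sigma> y)) \<longleftrightarrow>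
          (\<forall>y. 1 * \<sigma> (cyc_map n \<tau> a y) = cyc_map n \<tau> b (c * \<sigma> y))"
      using that by (auto simp: Gal_mult Gal_one dest: spec[of _ 1])
    then show ?thesis using Gal_cyc_map_scaled_iff[OF that(2), where d=1] by simp
  qed
  then show ?thesis
    unfolding twisted_iso_iff_scaled_Gal[OF bij_id assms] id_apply
    by (intro ex_cong1 conj_cong refl)
qed

text \<open>Evaluating the isomorphism condition at preimages \<open>x\<^sub>0\<close>, \<open>y\<^sub>0\<close> of \<open>1\<close> under the two
  factors splits it into a condition on the coefficients and one on \<open>g'\<close>; the normalisation
  \<open>a 0 = b 0 = 1\<close> identifies the two constants that appear.\<close>
lemma twisted_iso_cyc_map_iff:
  assumes bij_a: "bij (cyc_map n \<tau> a)" and bij_g: "bij g" and a0: "a 0 = 1" and b0: "b 0 = 1"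
  shows "twisted_iso F (cyc_map n \<tau> a) g (cyc_map n \<tau> b) g' \<longleftrightarrow>
    (\<exists>c \<sigma>. c \<noteq> 0 \<and> \<sigma> \<in> Gal F \<and> (\<forall>i<n. c * \<sigma> (a i) = b i * (\<tau> ^^ i) c) \<and>
       (\<forall>u. g' (c * \<sigma> u) = \<sigma> (g u)))"
proof -
  let ?A = "cyc_map n \<tau> a" and ?B = "cyc_map n \<tau> b"
  have "(\<forall>x y. c * \<sigma> (?A x * g y) = ?B (c * \<sigma> x) * g' (c * \<sigma> y)) \<longleftrightarrow>
        (\<forall>i<n. c * \<sigma> (a i) = b i * (\<tau> ^^ i) c) \<and> (\<forall>u. g' (c * \<sigma> u) = \<sigma> (g u))"
    if c: "c \<noteq> 0" and \<sigma>: "\<sigma> \<in> Gal F" for c \<sigma>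
  proof
    assume iso: "\<forall>x y. c * \<sigma> (?A x * g y) = ?B (c * \<sigma> x) * g' (c * \<sigma> y)"
    obtain x0 y0 where x0: "?A x0 = 1" and y0: "g y0 = 1"
      using bij_a bij_g by (metis bij_pointE)
    define \<alpha> \<beta> where "\<alpha> = ?B (c * \<sigma> x0)" and "\<beta> = g' (c * \<sigma> y0)"
    have c_eq: "c = \<alpha> * \<beta>"
      using iso[rule_format, of x0 y0] by (simp add: x0 y0 \<alpha>_def \<beta>_def Gal_one[OF \<sigma>])
    have "\<alpha> * \<sigma> (?A x) = ?B (c * \<sigma> x)" for x
    proof -
      have "c * \<sigma> (?A x) = ?B (c * \<sigma> x) * \<beta>"
        using iso[rule_format, of x y0] by (simp add: y0 \<beta>_def Gal_one[OF \<sigma>])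
      then show ?thesis using c unfolding c_eq by (simp add: field_simps)
    qed
    then have coeffs: "\<forall>i<n. \<alpha> * \<sigma> (a i) = b i * (\<tau> ^^ i) c"
      using Gal_cyc_map_scaled_iff[OF \<sigma>] by blast
    then have "\<alpha> = c" using n_pos a0 b0 by (auto simp: Gal_one[OF \<sigma>] dest: spec[of _ 0])
    moreover have "c * \<sigma> (g u) = \<alpha> * g' (c * \<sigma> u)" for u
      using iso[rule_format, of x0 u] by (simp add: x0 \<alpha>_def Gal_one[OF \<sigma>])
    ultimately show "(\<forall>i<n. c * \<sigma> (a i) = b i * (\<tau> ^^ i) c) \<and> (\<forall>u. g' (c * \<sigma> u) = \<sigma> (g u))"
      using coeffs c by simp
  next
    assume "(\<forall>i<n. c * \<sigma> (a i) = b i * (\<tau> ^^ i) c) \<and> (\<forall>u. g' (c * \<sigma> u) = \<sigma> (g u))"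
    then have "c * \<sigma> (?A x) = ?B (c * \<sigma> x)" and "g' (c * \<sigma> y) = \<sigma> (g y)" for x y
      using Gal_cyc_map_scaled_iff[OF \<sigma>] by blast+
    then show "\<forall>x y. c * \<sigma> (?A x * g y) = ?B (c * \<sigma> x) * g' (c * \<sigma> y)"
      by (simp add: Gal_mult[OF \<sigma>] mult.assoc)
  qed
  then show ?thesis
    unfolding twisted_iso_iff_scaled_Gal[OF bij_a bij_g] by (intro ex_cong1 conj_cong refl)
qed

lemma cond1_iff_scaled:
  assumes \<sigma>: "\<sigma> \<in> Gal F" and "2 \<le> n" and "z 1 = y 1"
  shows "cond1 n \<tau> y z g g' \<sigma> \<longleftrightarrow>
    (\<exists>c. c \<noteq> 0 \<and> (\<forall>i<n. c * \<sigma> ((y(0 := 1)) i) = (z(0 := 1)) i * (\<tau> ^^ i) c) \<and>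
       (\<forall>u. g' (c * \<sigma> u) = \<sigma> (g u)))"
    (is "_ \<longleftrightarrow> (\<exists>c. c \<noteq> 0 \<and> ?coeffs c \<and> ?g' c)")
proof -
  have coeffs_iff: "?coeffs (inverse v) \<longleftrightarrow> (\<forall>i\<in>{1..n-1}. z i = (\<tau> ^^ i) v * inverse v * \<sigma> (y i))"
    if "v \<noteq> 0" for v
  proof -
    have "inverse v * \<sigma> (y i) = z i * (\<tau> ^^ i) (inverse v) \<longleftrightarrow>
          z i = (\<tau> ^^ i) v * inverse v * \<sigma> (y i)" for i
      using Gal_unit_eq_iff[OF tau_pow_Gal, of "inverse v" "inverse v * \<sigma> (y i)" "z i" i] that
      by (simp add: ac_simps)
    then show ?thesis
      using all_less_iff_zero_and_range[OF n_pos] by (simp add: Gal_one[OF \<sigma>])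
  qed
  have g'_iff: "?g' (inverse v) \<longleftrightarrow> g' = (\<lambda>u. \<sigma> (g (inv \<sigma> (v * u))))" if "v \<noteq> 0" for v
    using comp_scaled_bij_eq_iff[OF Gal_bij[OF \<sigma>], of "inverse v"] that by simp
  have one: "1 \<in> {1..n-1}" using \<open>2 \<le> n\<close> by simp
  show ?thesis
  proof
    assume "cond1 n \<tau> y z g g' \<sigma>"
    then obtain v where "v \<noteq> 0" "\<forall>i\<in>{1..n-1}. z i = (\<tau> ^^ i) v * inverse v * \<sigma> (y i)"
      "g' = (\<lambda>u. \<sigma> (g (inv \<sigma> (v * u))))"
      unfolding cond1_def by blast
    then show "\<exists>c. c \<noteq> 0 \<and> ?coeffs c \<and> ?g' c"
      using coeffs_iff g'_iff by (intro exI[of _ "inverse v"]) simp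
  next
    assume "\<exists>c. c \<noteq> 0 \<and> ?coeffs c \<and> ?g' c"
    then obtain v where v: "v \<noteq> 0" "?coeffs (inverse v)" "?g' (inverse v)"
      by (metis inverse_inverse_eq inverse_zero)
    then have z: "\<forall>i\<in>{1..n-1}. z i = (\<tau> ^^ i) v * inverse v * \<sigma> (y i)"
      using coeffs_iff by blast
    then have "y 1 = \<tau> v * inverse v * \<sigma> (y 1)"
      using one \<open>z 1 = y 1\<close> by force
    then show "cond1 n \<tau> y z g g' \<sigma>"
      unfolding cond1_def using v z g'_iff by blast
  qed
qed

lemma twisted_iso_cyc_map_cond1_iff:
  assumes "2 \<le> n" and M: "norm_reps F M" and "bij g" and "y 1 \<in> M" "z 1 \<in> M"
    and "A0_norm_nonzero n \<tau> (y(0 := 1))"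
  shows "twisted_iso F (cyc_map n \<tau> (y(0 := 1))) g (cyc_map n \<tau> (z(0 := 1))) g'
     \<longleftrightarrow> z 1 = y 1 \<and> (\<exists>\<sigma>\<in>Gal F. cond1 n \<tau> y z g g' \<sigma>)"
proof -
  have iso_iff: "twisted_iso F (cyc_map n \<tau> (y(0 := 1))) g (cyc_map n \<tau> (z(0 := 1))) g' \<longleftrightarrow>
    (\<exists>c \<sigma>. c \<noteq> 0 \<and> \<sigma> \<in> Gal F \<and>
       (\<forall>i<n. c * \<sigma> ((y(0 := 1)) i) = (z(0 := 1)) i * (\<tau> ^^ i) c) \<and>
       (\<forall>u. g' (c * \<sigma> u) = \<sigma> (g u)))"
    using assms(3,6) by (intro twisted_iso_cyc_map_iff) (simp_all add: A0_norm_nonzero_def)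
  show ?thesis
  proof
    assume "twisted_iso F (cyc_map n \<tau> (y(0 := 1))) g (cyc_map n \<tau> (z(0 := 1))) g'"
    then obtain c \<sigma> where c: "c \<noteq> 0" and \<sigma>: "\<sigma> \<in> Gal F"
      and coeffs: "\<forall>i<n. c * \<sigma> ((y(0 := 1)) i) = (z(0 := 1)) i * (\<tau> ^^ i) c"
      and "\<forall>u. g' (c * \<sigma> u) = \<sigma> (g u)"
      unfolding iso_iff by blast
    have "c * \<sigma> (y 1) = z 1 * \<tau> c" using coeffs[rule_format, of 1] \<open>2 \<le> n\<close> by simp
    then have "z 1 = y 1"
      by (rule norm_reps_eq[OF M \<open>y 1 \<in> M\<close> \<open>z 1 \<in> M\<close> field_norm_eq_if_twisted[OF c \<sigma>]])
    moreover have "cond1 n \<tau> y z g g' \<sigma>"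
      using cond1_iff_scaled[where y=y and z=z, OF \<sigma> \<open>2 \<le> n\<close> \<open>z 1 = y 1\<close>] c coeffs
        \<open>\<forall>u. g' (c * \<sigma> u) = \<sigma> (g u)\<close> by blast
    ultimately show "z 1 = y 1 \<and> (\<exists>\<sigma>\<in>Gal F. cond1 n \<tau> y z g g' \<sigma>)" using \<sigma> by blast
  next
    assume "z 1 = y 1 \<and> (\<exists>\<sigma>\<in>Gal F. cond1 n \<tau> y z g g' \<sigma>)"
    then obtain \<sigma> where "\<sigma> \<in> Gal F" "cond1 n \<tau> y z g g' \<sigma>" "z 1 = y 1" by blast
    then show "twisted_iso F (cyc_map n \<tau> (y(0 := 1))) g (cyc_map n \<tau> (z(0 := 1))) g'"
      unfolding iso_iff using cond1_iff_scaled \<open>2 \<le> n\<close> by blast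
  qed
qed

lemma cond1_id_iff:
  assumes "y 1 \<noteq> 0" and lin: "F_linear F g"
  shows "cond1 n \<tau> y z g g' id \<longleftrightarrow>
          (\<forall>i\<in>{1..n-1}. z i = y i) \<and> (\<exists>a\<in>F. a \<noteq> 0 \<and> g' = (\<lambda>u. a * g u))"
proof
  assume "cond1 n \<tau> y z g g' id"
  then obtain v where v: "v \<noteq> 0" "y 1 = \<tau> v * inverse v * y 1"
    "\<forall>i\<in>{1..n-1}. z i = (\<tau> ^^ i) v * inverse v * y i" "g' = (\<lambda>u. g (v * u))"
    unfolding cond1_def by (auto simp: inv_id)
  have "\<tau> v = v" using v(1,2) \<open>y 1 \<noteq> 0\<close> by (simp add: field_simps)
  then have "v \<in> F" and "(\<tau> ^^ i) v = v" for i
    by (simp add: tau_fixed_imp_in_F, induction i) simp_all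
  then show "(\<forall>i\<in>{1..n-1}. z i = y i) \<and> (\<exists>a\<in>F. a \<noteq> 0 \<and> g' = (\<lambda>u. a * g u))"
    using v lin by (auto simp: F_linear_def)
next
  assume "(\<forall>i\<in>{1..n-1}. z i = y i) \<and> (\<exists>a\<in>F. a \<noteq> 0 \<and> g' = (\<lambda>u. a * g u))"
  then obtain a where "\<forall>i\<in>{1..n-1}. z i = y i" "a \<in> F" "a \<noteq> 0" "g' = (\<lambda>u. a * g u)"
    by blast
  moreover have "(\<tau> ^^ i) a = a" for i using Gal_fixes[OF tau_pow_Gal \<open>a \<in> F\<close>] .
  moreover have "\<tau> a = a" using Gal_fixes[OF tau_Gal \<open>a \<in> F\<close>] .
  ultimately show "cond1 n \<tau> y z g g' id"
    unfolding cond1_def using lin by (intro exI[of _ a]) (auto simp: inv_id F_linear_def)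
qed

lemma Gal_inv_F_mult:
  assumes "\<sigma> \<in> Gal F" "a \<in> F"
  shows "inv \<sigma> (a * w) = a * inv \<sigma> w"
proof -
  have "\<sigma> (a * inv \<sigma> w) = a * w"
    using assms by (simp add: Gal_mult Gal_fixes surj_f_inv_f[OF bij_is_surj[OF Gal_bij]])
  then show ?thesis
    using bij_inv_eq_iff[OF Gal_bij[OF assms(1)], of "a * inv \<sigma> w" "a * w"] by simp
qed

lemma ex_tau_fixed_multiple_iff:
  assumes "y \<noteq> 0"
  shows "(\<exists>v. v \<noteq> 0 \<and> \<tau> (v * y) = v * y \<and> P v) \<longleftrightarrow> (\<exists>a\<in>F. a \<noteq> 0 \<and> P (a * inverse y))"
proof
  assume "\<exists>v. v \<noteq> 0 \<and> \<tau> (v * y) = v * y \<and> P v"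
  then obtain v where "v \<noteq> 0" "\<tau> (v * y) = v * y" "P v" by blast
  then show "\<exists>a\<in>F. a \<noteq> 0 \<and> P (a * inverse y)"
    using assms by (intro bexI[of _ "v * y"]) (simp_all add: tau_fixed_imp_in_F mult.assoc)
next
  assume "\<exists>a\<in>F. a \<noteq> 0 \<and> P (a * inverse y)"
  then obtain a where "a \<in> F" "a \<noteq> 0" "P (a * inverse y)" by blast
  then show "\<exists>v. v \<noteq> 0 \<and> \<tau> (v * y) = v * y \<and> P v"
    using assms by (intro exI[of _ "a * inverse y"]) (simp add: Gal_fixes[OF tau_Gal] mult.assoc)
qed

lemma cond1_tau_iff:
  assumes y1: "y 1 \<noteq> 0" and lin: "F_linear F g"
  shows "cond1 n \<tau> y z g g' \<tau> \<longleftrightarrow>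
          (\<forall>i\<in>{1..n-1}. z i = (\<tau> ^^ i) (inverse (y 1)) * y 1 * \<tau> (y i)) \<and>
          (\<exists>a\<in>F. a \<noteq> 0 \<and> g' = (\<lambda>u. a * \<tau> (g (inv \<tau> (inverse (y 1) * u)))))"
proof -
  have g_form: "(\<lambda>u. \<tau> (g (inv \<tau> (a * inverse (y 1) * u))))
      = (\<lambda>u. a * \<tau> (g (inv \<tau> (inverse (y 1) * u))))" if "a \<in> F" for a
    using that lin
    by (simp add: mult.assoc Gal_inv_F_mult[OF tau_Gal] F_linear_def Gal_mult[OF tau_Gal]
        Gal_fixes[OF tau_Gal])
  have z_form: "(\<tau> ^^ i) (a * inverse (y 1)) * inverse (a * inverse (y 1)) * \<tau> (y i) =
       (\<tau> ^^ i) (inverse (y 1)) * y 1 * \<tau> (y i)" if "a \<in> F" "a \<noteq> 0" for a i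
  proof -
    have "(\<tau> ^^ i) (a * inverse (y 1)) = a * (\<tau> ^^ i) (inverse (y 1))"
      using that by (simp add: Gal_mult[OF tau_pow_Gal] Gal_fixes[OF tau_pow_Gal])
    then show ?thesis using that y1 by (simp add: field_simps)
  qed
  have y1_clause: "y 1 = \<tau> v * inverse v * \<tau> (y 1) \<longleftrightarrow> \<tau> (v * y 1) = v * y 1" if "v \<noteq> 0" for v
    using that y1 Gal_eq_0_iff[OF tau_Gal, of "y 1"]
    by (auto simp: Gal_mult[OF tau_Gal] field_simps)
  note v_to_a = ex_tau_fixed_multiple_iff[OF y1, of "\<lambda>v. (\<forall>i\<in>{1..n-1}. z i = (\<tau> ^^ i) v * inverse v * \<tau> (y i)) \<and>
      g' = (\<lambda>u. \<tau> (g (inv \<tau> (v * u))))"]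
  have "cond1 n \<tau> y z g g' \<tau> \<longleftrightarrow> (\<exists>v. v \<noteq> 0 \<and> \<tau> (v * y 1) = v * y 1 \<and>
      (\<forall>i\<in>{1..n-1}. z i = (\<tau> ^^ i) v * inverse v * \<tau> (y i)) \<and>
      g' = (\<lambda>u. \<tau> (g (inv \<tau> (v * u)))))"
    unfolding cond1_def using y1_clause by blast
  also have "\<dots> \<longleftrightarrow> (\<exists>a\<in>F. a \<noteq> 0 \<and>
      (\<forall>i\<in>{1..n-1}. z i = (\<tau> ^^ i) (inverse (y 1)) * y 1 * \<tau> (y i)) \<and>
      g' = (\<lambda>u. a * \<tau> (g (inv \<tau> (inverse (y 1) * u)))))"
    unfolding v_to_a by (intro bex_cong conj_cong refl) (simp_all only: z_form g_form not_False_eq_True)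
  finally show ?thesis by blast
qed

lemma twisted_iso_id_cyc_map_zero_iff:
  assumes "A0_norm_nonzero n \<tau> (x(0 := 0))"
  shows "twisted_iso F id (cyc_map n \<tau> (x(0 := 0))) id (cyc_map n \<tau> (w(0 := 0)))
     \<longleftrightarrow> (\<exists>v \<sigma>. v \<noteq> 0 \<and> \<sigma> \<in> Gal F \<and> (\<forall>i\<in>{1..n-1}. w i = \<sigma> (x i) * (\<tau> ^^ i) v))"
    (is "_ \<longleftrightarrow> (\<exists>v \<sigma>. v \<noteq> 0 \<and> \<sigma> \<in> Gal F \<and> ?rel v \<sigma>)")
proof -
  have coeffs_iff: "(\<forall>i<n. \<sigma> ((x(0 := 0)) i) = (w(0 := 0)) i * (\<tau> ^^ i) c) \<longleftrightarrow> ?rel (inverse c) \<sigma>"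
    if "c \<noteq> 0" "\<sigma> \<in> Gal F" for c \<sigma>
    using all_less_iff_zero_and_range[OF n_pos] Gal_unit_eq_iff[OF tau_pow_Gal that(1)]
    by (simp add: Gal_zero[OF that(2)])
  show ?thesis
    unfolding twisted_iso_id_cyc_map_iff[OF assms[unfolded A0_norm_nonzero_def]]
  proof
    assume "\<exists>c \<sigma>. c \<noteq> 0 \<and> \<sigma> \<in> Gal F \<and> (\<forall>i<n. \<sigma> ((x(0 := 0)) i) = (w(0 := 0)) i * (\<tau> ^^ i) c)"
    then obtain c \<sigma> where "c \<noteq> 0" "\<sigma> \<in> Gal F"
      "\<forall>i<n. \<sigma> ((x(0 := 0)) i) = (w(0 := 0)) i * (\<tau> ^^ i) c" by blast
    then show "\<exists>v \<sigma>. v \<noteq> 0 \<and> \<sigma> \<in> Gal F \<and> ?rel v \<sigma>"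
      using coeffs_iff by (intro exI[of _ "inverse c"] exI[of _ \<sigma>]) simp
  next
    assume "\<exists>v \<sigma>. v \<noteq> 0 \<and> \<sigma> \<in> Gal F \<and> ?rel v \<sigma>"
    then obtain v \<sigma> where "v \<noteq> 0" "\<sigma> \<in> Gal F" "?rel v \<sigma>" by blast
    then show "\<exists>c \<sigma>. c \<noteq> 0 \<and> \<sigma> \<in> Gal F \<and> (\<forall>i<n. \<sigma> ((x(0 := 0)) i) = (w(0 := 0)) i * (\<tau> ^^ i) c)"
      using coeffs_iff[of "inverse v" \<sigma>] by (intro exI[of _ "inverse v"] exI[of _ \<sigma>]) simp
  qed
qed

lemma twisted_iso_id_cyc_map_one_iff:
  assumes "A0_norm_nonzero n \<tau> (x(0 := 1))"
  shows "twisted_iso F id (cyc_map n \<tau> (x(0 := 1))) id (cyc_map n \<tau> (w(0 := 1)))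
     \<longleftrightarrow> (\<exists>\<sigma>\<in>Gal F. \<forall>i\<in>{1..n-1}. w i = \<sigma> (x i))"
proof -
  have coeffs_iff: "(\<forall>i<n. \<sigma> ((x(0 := 1)) i) = (w(0 := 1)) i * (\<tau> ^^ i) c) \<longleftrightarrow>
        c = 1 \<and> (\<forall>i\<in>{1..n-1}. w i = \<sigma> (x i))" if "\<sigma> \<in> Gal F" for c \<sigma>
    using all_less_iff_zero_and_range[OF n_pos]
    by (auto simp: Gal_one[OF that] Gal_one[OF tau_pow_Gal])
  show ?thesis
    unfolding twisted_iso_id_cyc_map_iff[OF assms[unfolded A0_norm_nonzero_def]]
  proof
    assume "\<exists>c \<sigma>. c \<noteq> 0 \<and> \<sigma> \<in> Gal F \<and> (\<forall>i<n. \<sigma> ((x(0 := 1)) i) = (w(0 := 1)) i * (\<tau> ^^ i) c)"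
    then show "\<exists>\<sigma>\<in>Gal F. \<forall>i\<in>{1..n-1}. w i = \<sigma> (x i)" using coeffs_iff by blast
  next
    assume "\<exists>\<sigma>\<in>Gal F. \<forall>i\<in>{1..n-1}. w i = \<sigma> (x i)"
    then obtain \<sigma> where "\<sigma> \<in> Gal F" "\<forall>i\<in>{1..n-1}. w i = \<sigma> (x i)" by blast
    then show "\<exists>c \<sigma>. c \<noteq> 0 \<and> \<sigma> \<in> Gal F \<and> (\<forall>i<n. \<sigma> ((x(0 := 1)) i) = (w(0 := 1)) i * (\<tau> ^^ i) c)"
      using coeffs_iff[of \<sigma> 1] by (intro exI[of _ 1] exI[of _ \<sigma>]) simp
  qed
qed

end

theorem mainTheorem17:
  fixes F :: "'a::field set" and n :: nat and \<tau> :: "'a \<Rightarrow> 'a" and M :: "'a set"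
  assumes cyc: "cyclic_galois F n \<tau>"
    and n2: "2 \<le> n"
    and M: "norm_reps F M"
  shows
   "(\<forall>(y::nat \<Rightarrow> 'a) z g g'. g \<in> GL F \<longrightarrow> g' \<in> GL F \<longrightarrow>
       y 1 \<in> M \<longrightarrow> z 1 \<in> M \<longrightarrow> (\<forall>i\<in>{2..n-1}. y i \<noteq> 0 \<and> z i \<noteq> 0) \<longrightarrow>
       A0_norm_nonzero n \<tau> (y(0 := 1)) \<longrightarrow> A0_norm_nonzero n \<tau> (z(0 := 1)) \<longrightarrow>
       (twisted_iso F (cyc_map n \<tau> (y(0 := 1))) g (cyc_map n \<tau> (z(0 := 1))) g'
          \<longleftrightarrow> z 1 = y 1 \<and> (\<exists>\<sigma>\<in>Gal F. cond1 n \<tau> y z g g' \<sigma>))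
     \<and> (cond1 n \<tau> y z g g' id \<longleftrightarrow>
          (\<forall>i\<in>{1..n-1}. z i = y i) \<and> (\<exists>a\<in>F. a \<noteq> 0 \<and> g' = (\<lambda>u. a * g u)))
     \<and> (cond1 n \<tau> y z g g' \<tau> \<longleftrightarrow>
          (\<forall>i\<in>{1..n-1}. z i = (\<tau> ^^ i) (inverse (y 1)) * y 1 * \<tau> (y i)) \<and>
          (\<exists>a\<in>F. a \<noteq> 0 \<and> g' = (\<lambda>u. a * \<tau> (g (inv \<tau> (inverse (y 1) * u)))))))
  \<and> (\<forall>(x::nat \<Rightarrow> 'a) w.
       A0_norm_nonzero n \<tau> (x(0 := 0)) \<longrightarrow> A0_norm_nonzero n \<tau> (w(0 := 0)) \<longrightarrow>
       (twisted_iso F id (cyc_map n \<tau> (x(0 := 0))) id (cyc_map n \<tau> (w(0 := 0)))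
          \<longleftrightarrow> (\<exists>v \<sigma>. v \<noteq> 0 \<and> \<sigma> \<in> Gal F \<and>
                 (\<forall>i\<in>{1..n-1}. w i = \<sigma> (x i) * (\<tau> ^^ i) v))))
  \<and> (\<forall>(x::nat \<Rightarrow> 'a) w.
       A0_norm_nonzero n \<tau> (x(0 := 1)) \<longrightarrow> A0_norm_nonzero n \<tau> (w(0 := 1)) \<longrightarrow>
       (twisted_iso F id (cyc_map n \<tau> (x(0 := 1))) id (cyc_map n \<tau> (w(0 := 1)))
          \<longleftrightarrow> (\<exists>\<sigma>\<in>Gal F. \<forall>i\<in>{1..n-1}. w i = \<sigma> (x i))))"
proof -
  interpret cyclic_extension F n \<tau> by (rule cyclic_extension.intro[OF cyc])
  have M_nonzero: "m \<noteq> 0" if "m \<in> M" for m using M that by (auto simp: norm_reps_def)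
  show ?thesis
  proof (intro conjI allI impI)
    fix y z :: "nat \<Rightarrow> 'a" and g g'
    assume g: "g \<in> GL F" and "y 1 \<in> M" "z 1 \<in> M" "A0_norm_nonzero n \<tau> (y(0 := 1))"
    then show "twisted_iso F (cyc_map n \<tau> (y(0 := 1))) g (cyc_map n \<tau> (z(0 := 1))) g'
          \<longleftrightarrow> z 1 = y 1 \<and> (\<exists>\<sigma>\<in>Gal F. cond1 n \<tau> y z g g' \<sigma>)"
      by (intro twisted_iso_cyc_map_cond1_iff[OF n2 M]) (simp_all add: GL_def)
    from g have "F_linear F g" by (simp add: GL_def)
    with M_nonzero[OF \<open>y 1 \<in> M\<close>]
    show "cond1 n \<tau> y z g g' id \<longleftrightarrow>
          (\<forall>i\<in>{1..n-1}. z i = y i) \<and> (\<exists>a\<in>F. a \<noteq> 0 \<and> g' = (\<lambda>u. a * g u))"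
      and "cond1 n \<tau> y z g g' \<tau> \<longleftrightarrow>
          (\<forall>i\<in>{1..n-1}. z i = (\<tau> ^^ i) (inverse (y 1)) * y 1 * \<tau> (y i)) \<and>
          (\<exists>a\<in>F. a \<noteq> 0 \<and> g' = (\<lambda>u. a * \<tau> (g (inv \<tau> (inverse (y 1) * u)))))"
      by (rule cond1_id_iff, rule cond1_tau_iff)
  qed (simp_all add: twisted_iso_id_cyc_map_zero_iff twisted_iso_id_cyc_map_one_iff)
qed

end
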